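(* Let $G$ be a prefix-independent game played on a finite graph, let $v_0\in V$, let $\epsilon\ge0$, and let $\lambda^*$ be the least $\epsilon$-fixed point of the negotiation function of $G$. Let $\theta$ be a play starting in $v_0$. If there exists an $\epsilon$-SPE $\bar\sigma$ in $G_{\|v_0}$ with $\langle\bar\sigma\rangle=\theta$, then $\theta$ is $\lambda^*$-consistent. If moreover $G$ has steady negotiation, then conversely, if $\theta$ is $\lambda^*$-consistent, there exists an $\epsilon$-SPE $\bar\sigma$ in $G_{\|v_0}$ with $\langle\bar\sigma\rangle=\theta$.
   Context: A game is a tuple $G=(\Pi,V,(V_i)_{i\in\Pi},E,\mu)$ where $\Pi$ is a finite set of players, $(V,E)$ is a directed graph in which every vertex has at least one outgoing edge, $(V_i)_{i\in\Pi}$ is a partition of $V$ ($V_i$ = vertices controlled by player $i$), and $\mu=(\mu_i)_{i\in\Pi}:V^\omega\to\mathbb{R}^\Pi$ is the payoff function. Plays are infinite paths, histories finite nonempty paths; $\rho_{\ge n}=\rho_n\rho_{n+1}\cdots$. A strategy for player $i$ from $v_0$ maps each history $hv$ starting at $v_0$ with $v\in V_i$ to a successor of $v$; $-i=\Pi\setminus\{i\}$; a complete profile $\bar\sigma$ from $v_0$ has a unique compatible play, its outcome $\langle\bar\sigma\rangle$; for a history $hv$, $\bar\sigma_{\|hv}$ is the profile from $v$ given by $\sigma_{j\|hv}(h')=\sigma_j(hh')$. $G$ is prefix-independent if $\mu(h\rho)=\mu(\rho)$ for every history $h$ and play $\rho$ with $h\rho$ a play. For $\epsilon\ge0$, a profile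 $\bar\sigma$ from $v_0$ is an $\epsilon$-SPE if for every history $hv$ from $v_0$, every player $i$ and every strategy $\sigma'_i$ from $v$, $\mu_i(\langle\bar\sigma_{-i\|hv},\sigma'_i\rangle)\le\mu_i(\langle\bar\sigma_{\|hv}\rangle)+\epsilon$ (a $0$-SPE is a subgame-perfect equilibrium). A requirement is a map $\lambda:V\to\overline{\mathbb{R}}=\mathbb{R}\cup\{\pm\infty\}$, ordered pointwise. A play $\rho$ is $\lambda$-consistent if for all $i$ and $n$ with $\rho_n\in V_i$, $\mu_i(\rho_{\ge n})\ge\lambda(\rho_n)$. For $v\in V_i$, a profile $\bar\sigma_{-i}$ from $v$ is $\lambda$-rational if there is a strategy $\sigma_i$ such that, with $\bar\sigma=(\bar\sigma_{-i},\sigma_i)$, for every history $hu$ from $v$ compatible with $\bar\sigma_{-i}$, the play $\langle\bar\sigma_{\|hu}\rangle$ is $\lambda$-consistent; $\lambda\mathsf{Rat}(v)$ is the set of such profiles. The negotiation function is $\mathsf{nego}(\lambda)(v)=\inf_{\bar\sigma_{-i}\in\lambda\mathsf{Rat}(v)}\sup_{\sigma_i}\mu_i(\langle\bar\sigma_{-i},\sigma_i\rangle)$ for $v\in V_i$, with $\inf\emptyset=+\infty$. $G$ has steady negotiation if for every requirement $\lambda$, every $i$ and every $v\in V_i$ with $\lambda\mathsf{Rat}(v)\ne\emptyset$, this infimum is attained. A requirement $\lambda$ is an $\epsilon$-fixed point of $\mathsf{nego}$ if for every $v$, $\lambda(v)-\epsilon\le\mathsf{nego}(\lambda)(v)\le\lambda(v)+\epsilon$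 (with $\pm\infty\pm\epsilon=\pm\infty$); a least one exists for every game. *)

theory Defs
  imports "HOL-Library.Extended_Real"
begin

text \<open>A game is given by: a set of players Pl, a vertex set V, an edge relation E,
  an owner map own (so that V_i = {v \<in> V. own v = i}), and a payoff mu, where
  mu i \<rho> is the payoff of player i on the play \<rho> :: nat \<Rightarrow> 'v.
  Histories are nonempty lists of vertices; strategies / profiles are functions
  on lists (values outside the relevant histories are irrelevant).\<close>

definition game :: "'p set \<Rightarrow> 'v set \<Rightarrow> ('v \<times> 'v) set \<Rightarrow> ('v \<Rightarrow> 'p) \<Rightarrow> bool" where
  "game Pl V E own \<longleftrightarrow> finite Pl \<and> E \<subseteq> V \<times> V \<and> (\<forall>v\<in>V. \<exists>u. (v, u) \<in> E) \<and> own ` V \<subseteq> Pl"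

definition is_play :: "'v set \<Rightarrow> ('v \<times> 'v) set \<Rightarrow> (nat \<Rightarrow> 'v) \<Rightarrow> bool" where
  "is_play V E \<rho> \<longleftrightarrow> (\<forall>n. \<rho> n \<in> V \<and> (\<rho> n, \<rho> (Suc n)) \<in> E)"

definition is_hist :: "'v set \<Rightarrow> ('v \<times> 'v) set \<Rightarrow> 'v \<Rightarrow> 'v list \<Rightarrow> bool" where
  "is_hist V E v h \<longleftrightarrow> h \<noteq> [] \<and> hd h = v \<and> set h \<subseteq> V \<and>
     (\<forall>k. Suc k < length h \<longrightarrow> (h ! k, h ! Suc k) \<in> E)"

definition prefix_independent :: "'p set \<Rightarrow> 'v set \<Rightarrow> ('v \<times> 'v) set \<Rightarrow> ('p \<Rightarrow> (nat \<Rightarrow> 'v) \<Rightarrow> real) \<Rightarrow> bool" where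
  "prefix_independent Pl V E mu \<longleftrightarrow>
     (\<forall>i\<in>Pl. \<forall>\<rho> n. is_play V E \<rho> \<longrightarrow> mu i (\<lambda>k. \<rho> (n + k)) = mu i \<rho>)"

definition is_strategy :: "'v set \<Rightarrow> ('v \<times> 'v) set \<Rightarrow> ('v \<Rightarrow> 'p) \<Rightarrow> 'p \<Rightarrow> 'v \<Rightarrow> ('v list \<Rightarrow> 'v) \<Rightarrow> bool" where
  "is_strategy V E own i v s \<longleftrightarrow>
     (\<forall>h. is_hist V E v h \<and> own (last h) = i \<longrightarrow> (last h, s h) \<in> E)"

definition is_profile :: "'p set \<Rightarrow> 'v set \<Rightarrow> ('v \<times> 'v) set \<Rightarrow> ('v \<Rightarrow> 'p) \<Rightarrow> 'v \<Rightarrow> ('p \<Rightarrow> 'v list \<Rightarrow> 'v) \<Rightarrow> bool" where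
  "is_profile Pl V E own v \<sigma> \<longleftrightarrow> (\<forall>j\<in>Pl. is_strategy V E own j v (\<sigma> j))"

fun out_hist :: "('v \<Rightarrow> 'p) \<Rightarrow> ('p \<Rightarrow> 'v list \<Rightarrow> 'v) \<Rightarrow> 'v \<Rightarrow> nat \<Rightarrow> 'v list" where
  "out_hist own \<sigma> v 0 = [v]"
| "out_hist own \<sigma> v (Suc n) =
     (let h = out_hist own \<sigma> v n in h @ [\<sigma> (own (last h)) h])"

definition outcome :: "('v \<Rightarrow> 'p) \<Rightarrow> ('p \<Rightarrow> 'v list \<Rightarrow> 'v) \<Rightarrow> 'v \<Rightarrow> nat \<Rightarrow> 'v" where
  "outcome own \<sigma> v n = last (out_hist own \<sigma> v n)"

text \<open>Subgame profile after history hv: sigma_j||hv (h') = sigma_j (h h').\<close>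
definition subprof :: "('p \<Rightarrow> 'v list \<Rightarrow> 'v) \<Rightarrow> 'v list \<Rightarrow> ('p \<Rightarrow> 'v list \<Rightarrow> 'v)" where
  "subprof \<sigma> hv = (\<lambda>j h'. \<sigma> j (butlast hv @ h'))"

definition eps_SPE :: "'p set \<Rightarrow> 'v set \<Rightarrow> ('v \<times> 'v) set \<Rightarrow> ('v \<Rightarrow> 'p) \<Rightarrow> ('p \<Rightarrow> (nat \<Rightarrow> 'v) \<Rightarrow> real)
      \<Rightarrow> real \<Rightarrow> 'v \<Rightarrow> ('p \<Rightarrow> 'v list \<Rightarrow> 'v) \<Rightarrow> bool" where
  "eps_SPE Pl V E own mu \<epsilon> v0 \<sigma> \<longleftrightarrow> is_profile Pl V E own v0 \<sigma> \<and>
     (\<forall>hv. is_hist V E v0 hv \<longrightarrow> (\<forall>i\<in>Pl. \<forall>\<tau>. is_strategy V E own i (last hv) \<tau> \<longrightarrow>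
        mu i (outcome own ((subprof \<sigma> hv)(i := \<tau>)) (last hv))
          \<le> mu i (outcome own (subprof \<sigma> hv) (last hv)) + \<epsilon>))"

text \<open>Requirements are maps V -> extended reals (values outside V irrelevant).\<close>
definition consistent :: "('v \<Rightarrow> 'p) \<Rightarrow> ('p \<Rightarrow> (nat \<Rightarrow> 'v) \<Rightarrow> real) \<Rightarrow> ('v \<Rightarrow> ereal) \<Rightarrow> (nat \<Rightarrow> 'v) \<Rightarrow> bool" where
  "consistent own mu lam \<rho> \<longleftrightarrow>
     (\<forall>n. lam (\<rho> n) \<le> ereal (mu (own (\<rho> n)) (\<lambda>k. \<rho> (n + k))))"

definition compatible :: "('v \<Rightarrow> 'p) \<Rightarrow> ('p \<Rightarrow> 'v list \<Rightarrow> 'v) \<Rightarrow> 'p \<Rightarrow> 'v list \<Rightarrow> bool" where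
  "compatible own \<sigma> i h \<longleftrightarrow>
     (\<forall>k. Suc k < length h \<longrightarrow> own (h ! k) \<noteq> i \<longrightarrow> h ! Suc k = \<sigma> (own (h ! k)) (take (Suc k) h))"

text \<open>lambda-Rat(v): profiles sigma_{-i} (given as full profiles whose i-component is ignored),
  i = own v, that are lambda-rational.\<close>
definition lamRat :: "'p set \<Rightarrow> 'v set \<Rightarrow> ('v \<times> 'v) set \<Rightarrow> ('v \<Rightarrow> 'p) \<Rightarrow> ('p \<Rightarrow> (nat \<Rightarrow> 'v) \<Rightarrow> real)
      \<Rightarrow> ('v \<Rightarrow> ereal) \<Rightarrow> 'v \<Rightarrow> ('p \<Rightarrow> 'v list \<Rightarrow> 'v) set" where
  "lamRat Pl V E own mu lam v = {\<sigma>.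
     (\<forall>j\<in>Pl - {own v}. is_strategy V E own j v (\<sigma> j)) \<and>
     (\<exists>\<tau>. is_strategy V E own (own v) v \<tau> \<and>
        (\<forall>hu. is_hist V E v hu \<and> compatible own \<sigma> (own v) hu \<longrightarrow>
           consistent own mu lam (outcome own (subprof (\<sigma>(own v := \<tau>)) hu) (last hu))))}"

definition nego_val :: "'p set \<Rightarrow> 'v set \<Rightarrow> ('v \<times> 'v) set \<Rightarrow> ('v \<Rightarrow> 'p) \<Rightarrow> ('p \<Rightarrow> (nat \<Rightarrow> 'v) \<Rightarrow> real)
      \<Rightarrow> 'v \<Rightarrow> ('p \<Rightarrow> 'v list \<Rightarrow> 'v) \<Rightarrow> ereal" where
  "nego_val Pl V E own mu v \<sigma> =
     (SUP \<tau> \<in> {\<tau>. is_strategy V E own (own v) v \<tau>}. ereal (mu (own v) (outcome own (\<sigma>(own v := \<tau>)) v)))"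

definition nego :: "'p set \<Rightarrow> 'v set \<Rightarrow> ('v \<times> 'v) set \<Rightarrow> ('v \<Rightarrow> 'p) \<Rightarrow> ('p \<Rightarrow> (nat \<Rightarrow> 'v) \<Rightarrow> real)
      \<Rightarrow> ('v \<Rightarrow> ereal) \<Rightarrow> 'v \<Rightarrow> ereal" where
  "nego Pl V E own mu lam v =
     (INF \<sigma> \<in> lamRat Pl V E own mu lam v. nego_val Pl V E own mu v \<sigma>)"

definition steady_negotiation :: "'p set \<Rightarrow> 'v set \<Rightarrow> ('v \<times> 'v) set \<Rightarrow> ('v \<Rightarrow> 'p) \<Rightarrow> ('p \<Rightarrow> (nat \<Rightarrow> 'v) \<Rightarrow> real) \<Rightarrow> bool" where
  "steady_negotiation Pl V E own mu \<longleftrightarrow>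
     (\<forall>lam. \<forall>v\<in>V. lamRat Pl V E own mu lam v \<noteq> {} \<longrightarrow>
        (\<exists>\<sigma>\<in>lamRat Pl V E own mu lam v. nego_val Pl V E own mu v \<sigma> = nego Pl V E own mu lam v))"

definition eps_fixed_point :: "'p set \<Rightarrow> 'v set \<Rightarrow> ('v \<times> 'v) set \<Rightarrow> ('v \<Rightarrow> 'p) \<Rightarrow> ('p \<Rightarrow> (nat \<Rightarrow> 'v) \<Rightarrow> real)
      \<Rightarrow> real \<Rightarrow> ('v \<Rightarrow> ereal) \<Rightarrow> bool" where
  "eps_fixed_point Pl V E own mu \<epsilon> lam \<longleftrightarrow>
     (\<forall>v\<in>V. lam v - ereal \<epsilon> \<le> nego Pl V E own mu lam v \<and> nego Pl V E own mu lam v \<le> lam v + ereal \<epsilon>)"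

definition least_eps_fixed_point :: "'p set \<Rightarrow> 'v set \<Rightarrow> ('v \<times> 'v) set \<Rightarrow> ('v \<Rightarrow> 'p) \<Rightarrow> ('p \<Rightarrow> (nat \<Rightarrow> 'v) \<Rightarrow> real)
      \<Rightarrow> real \<Rightarrow> ('v \<Rightarrow> ereal) \<Rightarrow> bool" where
  "least_eps_fixed_point Pl V E own mu \<epsilon> lam \<longleftrightarrow> eps_fixed_point Pl V E own mu \<epsilon> lam \<and>
     (\<forall>lam'. eps_fixed_point Pl V E own mu \<epsilon> lam' \<longrightarrow> (\<forall>v\<in>V. lam v \<le> lam' v))"

end

theory Submission
  imports Defs
begin

text \<open>
  Write \<open>P(u)\<close> for the infimum, over all \<open>\<epsilon>\<close>-SPEs from \<open>u\<close>, of the payoff of the owner of \<open>u\<close>.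
  Subgames of \<open>\<epsilon>\<close>-SPEs are \<open>\<epsilon>\<close>-SPEs, so every \<open>\<epsilon>\<close>-SPE outcome is \<open>P\<close>-consistent and every
  \<open>\<epsilon>\<close>-SPE from \<open>u\<close> is a \<open>P\<close>-rational environment of the owner of \<open>u\<close>; hence
  \<open>nego(P) - \<epsilon> \<le> P\<close>. The least fixed point of the monotone map \<open>\<lambda> \<mapsto> nego(\<lambda>) - \<epsilon>\<close> is an
  \<open>\<epsilon>\<close>-fixed point below \<open>P\<close>, so \<open>\<lambda>\<^sup>*\<close> lies below \<open>P\<close> and SPE outcomes are \<open>\<lambda>\<^sup>*\<close>-consistent.

  Conversely, steady negotiation provides at every vertex \<open>w\<close> a \<open>\<lambda>\<^sup>*\<close>-rational environment
  attaining \<open>nego(\<lambda>\<^sup>*)(w)\<close>, together with a response of the owner of \<open>w\<close> that keeps all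
  continuations \<open>\<lambda>\<^sup>*\<close>-consistent. The constructed profile follows \<open>\<theta>\<close>; after a deviation
  at \<open>w\<close> it punishes the deviator with the environment chosen at \<open>w\<close>, unless that player is
  already punished from a vertex of no larger negotiation value. A player who deviates
  forever therefore moves the punishment only to vertices of strictly smaller negotiation
  value, which on a finite graph happens finitely often; his payoff is then bounded by the
  negotiation value at his first deviation vertex, hence by the requirement there plus
  \<open>\<epsilon>\<close>, which the continuation of the profile meets by prefix-independence.
\<close>

section \<open>Plays generated by a move function\<close>

definition hist_upto :: "(nat \<Rightarrow> 'v) \<Rightarrow> nat \<Rightarrow> 'v list" where
  "hist_upto \<rho> m = map \<rho> [0..<Suc m]"

function play_ext :: "('v list \<Rightarrow> 'v) \<Rightarrow> 'v list \<Rightarrow> nat \<Rightarrow> 'v" where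
  "play_ext F g m = (if m < length g then g ! m else F (map (play_ext F g) [0..<m]))"
  by auto
termination by (relation "measure (\<lambda>(F, g, m). m)") auto

declare play_ext.simps[simp del]

lemma hist_upto_length[simp]: "length (hist_upto \<rho> m) = Suc m"
  by (simp add: hist_upto_def)

lemma hist_upto_nth[simp]: "j \<le> m \<Longrightarrow> hist_upto \<rho> m ! j = \<rho> j"
  by (simp add: hist_upto_def nth_append del: upt_Suc)

lemma hist_upto_last[simp]: "last (hist_upto \<rho> m) = \<rho> m"
  by (simp add: hist_upto_def)

lemma hist_upto_not_Nil[simp]: "hist_upto \<rho> m \<noteq> []"
  by (simp add: hist_upto_def)

lemma hist_upto_Suc: "hist_upto \<rho> (Suc m) = hist_upto \<rho> m @ [\<rho> (Suc m)]"
  by (simp add: hist_upto_def)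

lemma take_hist_upto: "j \<le> m \<Longrightarrow> take (Suc j) (hist_upto \<rho> m) = hist_upto \<rho> j"
  by (simp add: hist_upto_def take_map min_def del: upt_Suc)

lemma drop_hist_upto: "drop k (hist_upto \<rho> (k + n)) = hist_upto (\<lambda>j. \<rho> (k + j)) n"
  by (simp add: list_eq_iff_nth_eq hist_upto_def del: upt_Suc)

lemma hist_upto_cong: "(\<And>j. j \<le> m \<Longrightarrow> \<rho> j = \<rho>' j) \<Longrightarrow> hist_upto \<rho> m = hist_upto \<rho>' m"
  by (simp add: hist_upto_def del: upt_Suc)

lemma play_ext_less: "m < length g \<Longrightarrow> play_ext F g m = g ! m"
  by (simp add: play_ext.simps)

lemma play_ext_Suc: "length g \<le> Suc m \<Longrightarrow> play_ext F g (Suc m) = F (hist_upto (play_ext F g) m)"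
  by (subst play_ext.simps) (simp add: hist_upto_def del: upt_Suc)

lemma hist_upto_play_ext_less: "m < length g \<Longrightarrow> hist_upto (play_ext F g) m = take (Suc m) g"
  by (simp add: list_eq_iff_nth_eq play_ext_less)

lemma play_ext_unique:
  assumes "g \<noteq> []" and "\<forall>m<length g. \<rho> m = g ! m"
    and "\<forall>m. length g \<le> Suc m \<longrightarrow> \<rho> (Suc m) = F (hist_upto \<rho> m)"
  shows "\<rho> = play_ext F g"
proof
  fix m show "\<rho> m = play_ext F g m"
  proof (induction m rule: less_induct)
    case (less m)
    show ?case
    proof (cases "m < length g")
      case True thus ?thesis using assms(2) by (simp add: play_ext_less)
    next
      case False
      then obtain m' where m: "m = Suc m'" using assms(1) by (cases m) auto
      have "hist_upto \<rho> m' = hist_upto (play_ext F g) m'"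
        by (rule hist_upto_cong) (use less m in auto)
      thus ?thesis using assms(3) False m play_ext_Suc[of g m' F] by simp
    qed
  qed
qed

lemma play_ext_hist_upto:
  assumes "g \<noteq> []" "length g \<le> Suc m"
  shows "play_ext F (hist_upto (play_ext F g) m) = play_ext F g"
  by (rule sym, rule play_ext_unique) (use assms in \<open>auto simp: play_ext_less play_ext_Suc\<close>)

lemma play_ext_cong:
  assumes "g \<noteq> []"
    and "\<forall>m. length g \<le> Suc m \<longrightarrow> F (hist_upto (play_ext F g) m) = F' (hist_upto (play_ext F g) m)"
  shows "play_ext F' g = play_ext F g"
  by (rule sym, rule play_ext_unique) (use assms in \<open>auto simp: play_ext_less play_ext_Suc\<close>)

lemma play_ext_agree_until:
  assumes "g \<noteq> []"
    and "\<forall>m. length g \<le> Suc m \<longrightarrow> m < n \<longrightarrow>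
           G (hist_upto (play_ext G g) m) = F (hist_upto (play_ext G g) m)"
  shows "j \<le> n \<Longrightarrow> play_ext G g j = play_ext F g j"
proof (induction j rule: less_induct)
  case (less j)
  show ?case
  proof (cases "j < length g")
    case True thus ?thesis by (simp add: play_ext_less)
  next
    case False
    then obtain m where j: "j = Suc m" and m: "length g \<le> Suc m" using assms(1) by (cases j) auto
    have "play_ext G g j = G (hist_upto (play_ext G g) m)" using j m by (simp add: play_ext_Suc)
    also have "\<dots> = F (hist_upto (play_ext G g) m)" using assms(2) less.prems j m by simp
    also have "hist_upto (play_ext G g) m = hist_upto (play_ext F g) m"
      by (rule hist_upto_cong) (use less j in auto)
    finally show ?thesis using j m by (simp add: play_ext_Suc)
  qed
qed

lemma play_ext_first_divergence:
  assumes ne: "g \<noteq> []" and diff: "play_ext G g \<noteq> play_ext F g"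
  obtains m where "length g \<le> Suc m" "G (hist_upto (play_ext G g) m) \<noteq> F (hist_upto (play_ext G g) m)"
    "play_ext F (hist_upto (play_ext G g) m) = play_ext F g"
proof -
  let ?P = "\<lambda>m. length g \<le> Suc m \<and> G (hist_upto (play_ext G g) m) \<noteq> F (hist_upto (play_ext G g) m)"
  have "\<exists>m. ?P m"
  proof (rule ccontr)
    assume "\<not> (\<exists>m. ?P m)"
    hence "play_ext F g = play_ext G g" by (intro play_ext_cong[OF ne]) auto
    thus False using diff by simp
  qed
  hence m: "?P (LEAST m. ?P m)" by (rule LeastI_ex)
  have "play_ext G g j = play_ext F g j" if "j \<le> (LEAST m. ?P m)" for j
    by (rule play_ext_agree_until[OF ne _ that]) (use not_less_Least in blast)
  hence "hist_upto (play_ext G g) (LEAST m. ?P m) = hist_upto (play_ext F g) (LEAST m. ?P m)"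
    by (rule hist_upto_cong)
  hence "play_ext F (hist_upto (play_ext G g) (LEAST m. ?P m)) = play_ext F g"
    using play_ext_hist_upto[OF ne] m by simp
  thus ?thesis using m that by blast
qed

lemma play_ext_drop:
  assumes "k < length h"
  shows "(\<lambda>j. play_ext (\<lambda>g. G (drop k g)) h (k + j)) = play_ext G (drop k h)"
proof (rule play_ext_unique)
  show "drop k h \<noteq> []" using assms by simp
  show "\<forall>m<length (drop k h). play_ext (\<lambda>g. G (drop k g)) h (k + m) = drop k h ! m"
    by (auto simp: play_ext_less)
  show "\<forall>m. length (drop k h) \<le> Suc m \<longrightarrow> play_ext (\<lambda>g. G (drop k g)) h (k + Suc m)
          = G (hist_upto (\<lambda>j. play_ext (\<lambda>g. G (drop k g)) h (k + j)) m)"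
  proof (intro allI impI)
    fix m assume "length (drop k h) \<le> Suc m"
    hence "length h \<le> Suc (k + m)" using assms by simp
    thus "play_ext (\<lambda>g. G (drop k g)) h (k + Suc m)
          = G (hist_upto (\<lambda>j. play_ext (\<lambda>g. G (drop k g)) h (k + j)) m)"
      by (simp add: play_ext_Suc flip: drop_hist_upto)
  qed
qed

lemma butlast_append_drop_hist_upto_play_ext:
  assumes "hv \<noteq> []" "length hv \<le> Suc m"
  shows "butlast hv @ drop (length hv - 1) (hist_upto (play_ext F hv) m) = hist_upto (play_ext F hv) m"
proof -
  have "take (length hv - 1) (hist_upto (play_ext F hv) m) = map (play_ext F hv) [0..<length hv - 1]"
    using assms by (simp add: hist_upto_def take_map min_def del: upt_Suc)
  also have "\<dots> = map (\<lambda>j. hv ! j) [0..<length hv - 1]"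
    by (rule map_cong) (auto simp: play_ext_less)
  also have "\<dots> = butlast hv" by (simp add: list_eq_iff_nth_eq nth_butlast)
  finally show ?thesis by (metis append_take_drop_id)
qed

section \<open>Outcomes of profiles and of their subgames\<close>

lemma out_hist_eq_hist_upto: "out_hist own \<sigma> v n = hist_upto (play_ext (\<lambda>h. \<sigma> (own (last h)) h) [v]) n"
  by (induction n) (simp_all add: hist_upto_def play_ext_less hist_upto_Suc play_ext_Suc Let_def)

lemma outcome_eq_play_ext: "outcome own \<sigma> v = play_ext (\<lambda>h. \<sigma> (own (last h)) h) [v]"
  by (rule ext) (simp add: outcome_def out_hist_eq_hist_upto)

lemma outcome_from_last:
  assumes "hv \<noteq> []"
  shows "outcome own \<rho> (last hv)
    = (\<lambda>n. play_ext (\<lambda>h. \<rho> (own (last h)) (drop (length hv - 1) h)) hv (length hv - 1 + n))"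
    (is "_ = ?r")
proof -
  let ?k = "length hv - 1"
  let ?E = "play_ext (\<lambda>h. \<rho> (own (last h)) (drop ?k h)) hv"
  have "?r = play_ext (\<lambda>h. \<rho> (own (last h)) h) [last hv]"
  proof (rule play_ext_unique)
    show "\<forall>m<length [last hv]. ?r m = [last hv] ! m"
      using assms by (simp add: play_ext_less last_conv_nth)
    show "\<forall>m. length [last hv] \<le> Suc m \<longrightarrow> ?r (Suc m) = \<rho> (own (last (hist_upto ?r m))) (hist_upto ?r m)"
    proof (intro allI impI)
      fix m
      have "?r (Suc m) = ?E (Suc (?k + m))" by simp
      also have "\<dots> = \<rho> (own (last (hist_upto ?E (?k + m)))) (drop ?k (hist_upto ?E (?k + m)))"
        using assms by (subst play_ext_Suc) auto
      also have "drop ?k (hist_upto ?E (?k + m)) = hist_upto ?r m" by (rule drop_hist_upto)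
      finally show "?r (Suc m) = \<rho> (own (last (hist_upto ?r m))) (hist_upto ?r m)" by simp
    qed
  qed simp
  thus ?thesis by (simp add: outcome_eq_play_ext)
qed

lemma outcome_subprof_upd:
  assumes "hv \<noteq> []"
  shows "outcome own ((subprof \<sigma> hv)(i := \<tau>)) (last hv)
    = (\<lambda>n. play_ext (\<lambda>h. if own (last h) = i then \<tau> (drop (length hv - 1) h) else \<sigma> (own (last h)) h)
            hv (length hv - 1 + n))"
proof -
  let ?F = "\<lambda>h. if own (last h) = i then \<tau> (drop (length hv - 1) h) else \<sigma> (own (last h)) h"
  have "play_ext (\<lambda>h. ((subprof \<sigma> hv)(i := \<tau>)) (own (last h)) (drop (length hv - 1) h)) hv
      = play_ext ?F hv"
    by (rule play_ext_cong)
      (use assms butlast_append_drop_hist_upto_play_ext[OF assms] in \<open>auto simp: subprof_def\<close>)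
  thus ?thesis using outcome_from_last[OF assms, of own "(subprof \<sigma> hv)(i := \<tau>)"] by simp
qed

lemma outcome_subprof:
  assumes "hv \<noteq> []"
  shows "outcome own (subprof \<sigma> hv) (last hv)
    = (\<lambda>n. play_ext (\<lambda>h. \<sigma> (own (last h)) h) hv (length hv - 1 + n))"
proof -
  have "play_ext (\<lambda>h. subprof \<sigma> hv (own (last h)) (drop (length hv - 1) h)) hv
      = play_ext (\<lambda>h. \<sigma> (own (last h)) h) hv"
    by (rule play_ext_cong)
      (use assms butlast_append_drop_hist_upto_play_ext[OF assms] in \<open>auto simp: subprof_def\<close>)
  thus ?thesis using outcome_from_last[OF assms, of own "subprof \<sigma> hv"] by simp
qed

lemma is_hist_snoc:
  assumes "h \<noteq> []"
  shows "is_hist V E v (h @ [x]) \<longleftrightarrow> is_hist V E v h \<and> x \<in> V \<and> (last h, x) \<in> E"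
proof -
  have steps: "(\<forall>k. Suc k < length (h @ [x]) \<longrightarrow> ((h @ [x]) ! k, (h @ [x]) ! Suc k) \<in> E)
    \<longleftrightarrow> (\<forall>k. Suc k < length h \<longrightarrow> (h ! k, h ! Suc k) \<in> E) \<and> (last h, x) \<in> E"
    (is "?L \<longleftrightarrow> ?R")
  proof
    assume L: ?L
    have "(h ! k, h ! Suc k) \<in> E" if "Suc k < length h" for k
      using L[rule_format, of k] that by (simp add: nth_append)
    moreover have "(last h, x) \<in> E"
      using L[rule_format, of "length h - 1"] assms by (simp add: nth_append last_conv_nth)
    ultimately show ?R by blast
  next
    assume ?R
    show ?L
    proof (intro allI impI)
      fix k assume "Suc k < length (h @ [x])"
      then consider "Suc k < length h" | "k = length h - 1" using assms by fastforce
      thus "((h @ [x]) ! k, (h @ [x]) ! Suc k) \<in> E"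
        by cases (use \<open>?R\<close> assms in \<open>auto simp: nth_append last_conv_nth\<close>)
    qed
  qed
  show ?thesis using assms unfolding is_hist_def steps by auto
qed

lemma is_hist_take:
  assumes "is_hist V E v h" "0 < j"
  shows "is_hist V E v (take j h)"
  using assms unfolding is_hist_def by (auto simp: hd_take dest: in_set_takeD)

lemma is_hist_drop:
  assumes "is_hist V E v h" "k < length h"
  shows "is_hist V E (h ! k) (drop k h)"
  using assms unfolding is_hist_def by (auto simp: hd_drop_conv_nth dest: in_set_dropD)

lemma is_hist_butlast_append:
  assumes "is_hist V E v hv" "is_hist V E (last hv) h'"
  shows "is_hist V E v (butlast hv @ h')"
  using assms(2)
proof (induction h' rule: rev_induct)
  case Nil thus ?case by (simp add: is_hist_def)
next
  case (snoc x ys)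
  show ?case
  proof (cases "ys = []")
    case True
    hence "x = last hv" using snoc.prems by (simp add: is_hist_def)
    thus ?thesis using True assms(1) by (simp add: is_hist_def)
  next
    case False
    thus ?thesis using snoc by (simp add: is_hist_snoc flip: append_assoc)
  qed
qed

lemma is_hist_hist_upto:
  assumes "is_play V E \<rho>"
  shows "is_hist V E (\<rho> 0) (hist_upto \<rho> m)"
proof (induction m)
  case 0 thus ?case using assms by (simp add: is_hist_def hist_upto_def is_play_def)
next
  case (Suc m) thus ?case using assms by (simp add: hist_upto_Suc is_hist_snoc is_play_def)
qed

lemma is_play_if_hist_upto:
  assumes "\<And>m. is_hist V E v (hist_upto \<rho> m)"
  shows "is_play V E \<rho>"
  unfolding is_play_def
proof
  fix n
  have "is_hist V E v (hist_upto \<rho> n @ [\<rho> (Suc n)])" using assms by (metis hist_upto_Suc)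
  hence "is_hist V E v (hist_upto \<rho> n)" "(\<rho> n, \<rho> (Suc n)) \<in> E" by (simp_all add: is_hist_snoc)
  moreover from this(1) have "\<rho> n \<in> V"
    using last_in_set[OF hist_upto_not_Nil] by (fastforce simp: is_hist_def)
  ultimately show "\<rho> n \<in> V \<and> (\<rho> n, \<rho> (Suc n)) \<in> E" by blast
qed

lemma play_ext_is_hist:
  assumes g: "is_hist V E v g"
    and moves: "\<And>h. \<lbrakk>is_hist V E v h; take (length g) h = g; length g \<le> length h\<rbrakk> \<Longrightarrow> (last h, F h) \<in> E"
    and EV: "E \<subseteq> V \<times> V"
  shows "is_hist V E v (hist_upto (play_ext F g) m)"
proof (induction m)
  case 0
  have "g \<noteq> []" using g by (simp add: is_hist_def)
  thus ?case using is_hist_take[OF g, of 1] by (simp add: hist_upto_play_ext_less)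
next
  case (Suc m)
  show ?case
  proof (cases "Suc m < length g")
    case True
    thus ?thesis using is_hist_take[OF g, of "Suc (Suc m)"] by (simp add: hist_upto_play_ext_less)
  next
    case False
    let ?h = "hist_upto (play_ext F g) m"
    have "take (length g) ?h = g"
      using False by (simp add: list_eq_iff_nth_eq play_ext_less min_def)
    from moves[OF Suc.IH this] have "(last ?h, F ?h) \<in> E" using False by simp
    moreover have "hist_upto (play_ext F g) (Suc m) = ?h @ [F ?h]"
      using False by (simp add: hist_upto_Suc play_ext_Suc)
    ultimately show ?thesis using Suc.IH EV by (auto simp: is_hist_snoc)
  qed
qed

lemma out_hist_is_hist:
  assumes G: "game Pl V E own" and \<sigma>: "is_profile Pl V E own v \<sigma>" and v: "v \<in> V"
  shows "is_hist V E v (out_hist own \<sigma> v n)"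
  unfolding out_hist_eq_hist_upto
proof (rule play_ext_is_hist)
  show "is_hist V E v [v]" using v by (simp add: is_hist_def)
  show "E \<subseteq> V \<times> V" using G by (simp add: game_def)
  fix h assume "is_hist V E v h"
  hence "own (last h) \<in> Pl" using G last_in_set by (fastforce simp: is_hist_def game_def)
  thus "(last h, \<sigma> (own (last h)) h) \<in> E"
    using \<sigma> \<open>is_hist V E v h\<close> by (auto simp: is_profile_def is_strategy_def)
qed

lemma outcome_is_play:
  assumes "game Pl V E own" "is_profile Pl V E own v \<sigma>" "v \<in> V"
  shows "is_play V E (outcome own \<sigma> v)"
  using out_hist_is_hist[OF assms]
  by (intro is_play_if_hist_upto) (simp add: outcome_eq_play_ext out_hist_eq_hist_upto)

lemma subprof_subprof: "h' \<noteq> [] \<Longrightarrow> subprof (subprof \<sigma> hv) h' = subprof \<sigma> (butlast hv @ h')"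
  by (simp add: subprof_def butlast_append)

lemma subprof_single[simp]: "subprof \<sigma> [u] = \<sigma>"
  by (simp add: subprof_def)

lemma outcome_subprof_out_hist:
  "outcome own (subprof \<sigma> (out_hist own \<sigma> w n)) (outcome own \<sigma> w n) = (\<lambda>j. outcome own \<sigma> w (n + j))"
proof -
  let ?F = "\<lambda>h. \<sigma> (own (last h)) h"
  let ?h = "hist_upto (play_ext ?F [w]) n"
  have "outcome own (subprof \<sigma> ?h) (last ?h) = (\<lambda>j. play_ext ?F ?h (n + j))"
    using outcome_subprof[of ?h own \<sigma>] by simp
  also have "play_ext ?F ?h = play_ext ?F [w]" by (rule play_ext_hist_upto) auto
  finally show ?thesis by (simp add: out_hist_eq_hist_upto outcome_eq_play_ext)
qed

lemma eps_SPE_subprof: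
  assumes S: "eps_SPE Pl V E own mu \<epsilon> u \<sigma>" and hv: "is_hist V E u hv"
  shows "eps_SPE Pl V E own mu \<epsilon> (last hv) (subprof \<sigma> hv)"
  unfolding eps_SPE_def
proof (intro conjI allI impI ballI)
  show "is_profile Pl V E own (last hv) (subprof \<sigma> hv)"
    unfolding is_profile_def is_strategy_def
  proof (intro ballI allI impI)
    fix j h' assume "j \<in> Pl" and h': "is_hist V E (last hv) h' \<and> own (last h') = j"
    moreover have "is_hist V E u (butlast hv @ h')" using is_hist_butlast_append[OF hv] h' by blast
    moreover have "h' \<noteq> []" using h' by (simp add: is_hist_def)
    ultimately show "(last h', subprof \<sigma> hv j h') \<in> E"
      using S unfolding eps_SPE_def is_profile_def is_strategy_def subprof_def
      by (metis last_appendR)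
  qed
next
  fix hv' i \<tau> assume hv': "is_hist V E (last hv) hv'" and "i \<in> Pl"
    and "is_strategy V E own i (last hv') \<tau>"
  moreover have "hv' \<noteq> []" using hv' by (simp add: is_hist_def)
  moreover have "is_hist V E u (butlast hv @ hv')" by (rule is_hist_butlast_append[OF hv hv'])
  ultimately show "mu i (outcome own ((subprof (subprof \<sigma> hv) hv')(i := \<tau>)) (last hv'))
        \<le> mu i (outcome own (subprof (subprof \<sigma> hv) hv') (last hv')) + \<epsilon>"
    using S unfolding eps_SPE_def by (metis subprof_subprof last_appendR)
qed

section \<open>Outcomes of \<open>\<epsilon>\<close>-SPEs are consistent with the least \<open>\<epsilon>\<close>-fixed point\<close>

text \<open>Outside \<open>V\<close> the value is irrelevant; \<open>\<infinity>\<close> keeps it out of every comparison.\<close>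
definition spe_requirement ::
    "'p set \<Rightarrow> 'v set \<Rightarrow> ('v \<times> 'v) set \<Rightarrow> ('v \<Rightarrow> 'p) \<Rightarrow> ('p \<Rightarrow> (nat \<Rightarrow> 'v) \<Rightarrow> real) \<Rightarrow> real \<Rightarrow> 'v \<Rightarrow> ereal"
  where
  "spe_requirement Pl V E own mu \<epsilon> u =
     (if u \<in> V then INF \<sigma> \<in> {\<sigma>. eps_SPE Pl V E own mu \<epsilon> u \<sigma>}. ereal (mu (own u) (outcome own \<sigma> u))
      else \<infinity>)"

lemma eps_SPE_outcome_consistent_spe_requirement:
  assumes G: "game Pl V E own" and S: "eps_SPE Pl V E own mu \<epsilon> w \<sigma>" and w: "w \<in> V"
  shows "consistent own mu (spe_requirement Pl V E own mu \<epsilon>) (outcome own \<sigma> w)"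
  unfolding consistent_def
proof
  fix n
  let ?\<rho> = "outcome own \<sigma> w" and ?h = "out_hist own \<sigma> w n"
  have prof: "is_profile Pl V E own w \<sigma>" using S by (simp add: eps_SPE_def)
  have H: "is_hist V E w ?h" by (rule out_hist_is_hist[OF G prof w])
  have L: "last ?h = ?\<rho> n" by (simp add: outcome_def)
  have "?\<rho> n \<in> V" using outcome_is_play[OF G prof w] by (simp add: is_play_def)
  moreover have "eps_SPE Pl V E own mu \<epsilon> (?\<rho> n) (subprof \<sigma> ?h)"
    using eps_SPE_subprof[OF S H] L by simp
  ultimately have "spe_requirement Pl V E own mu \<epsilon> (?\<rho> n)
      \<le> ereal (mu (own (?\<rho> n)) (outcome own (subprof \<sigma> ?h) (?\<rho> n)))"
    unfolding spe_requirement_def by (auto intro: INF_lower)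
  thus "spe_requirement Pl V E own mu \<epsilon> (?\<rho> n) \<le> ereal (mu (own (?\<rho> n)) (\<lambda>k. ?\<rho> (n + k)))"
    by (simp add: outcome_subprof_out_hist)
qed

lemma mono_nego_minus: "mono (\<lambda>lam u. nego Pl V E own mu lam u - ereal \<epsilon>)"
proof (rule monoI, rule le_funI)
  fix l1 l2 :: "'a \<Rightarrow> ereal" and u
  assume "l1 \<le> l2"
  hence "consistent own mu l2 \<rho> \<Longrightarrow> consistent own mu l1 \<rho>" for \<rho>
    unfolding consistent_def le_fun_def by (meson order_trans)
  hence "lamRat Pl V E own mu l2 u \<subseteq> lamRat Pl V E own mu l1 u"
    unfolding lamRat_def by blast
  hence "nego Pl V E own mu l1 u \<le> nego Pl V E own mu l2 u"
    unfolding nego_def by (rule INF_superset_mono) simp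
  thus "nego Pl V E own mu l1 u - ereal \<epsilon> \<le> nego Pl V E own mu l2 u - ereal \<epsilon>"
    by (simp add: ereal_minus_mono)
qed

lemma eps_SPE_in_lamRat_spe_requirement:
  assumes G: "game Pl V E own" and S: "eps_SPE Pl V E own mu \<epsilon> u \<sigma>" and u: "u \<in> V"
  shows "\<sigma> \<in> lamRat Pl V E own mu (spe_requirement Pl V E own mu \<epsilon>) u"
  unfolding lamRat_def
proof (intro CollectI conjI ballI exI[of _ "\<sigma> (own u)"] allI impI)
  have prof: "is_profile Pl V E own u \<sigma>" using S by (simp add: eps_SPE_def)
  thus "is_strategy V E own j u (\<sigma> j)" if "j \<in> Pl - {own u}" for j
    using that by (simp add: is_profile_def)
  show "is_strategy V E own (own u) u (\<sigma> (own u))"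
    using prof G u by (auto simp: is_profile_def game_def)
next
  fix hu assume hu: "is_hist V E u hu \<and> compatible own \<sigma> (own u) hu"
  hence "last hu \<in> V" using last_in_set by (fastforce simp: is_hist_def)
  thus "consistent own mu (spe_requirement Pl V E own mu \<epsilon>)
      (outcome own (subprof (\<sigma>(own u := \<sigma> (own u))) hu) (last hu))"
    using eps_SPE_outcome_consistent_spe_requirement[OF G eps_SPE_subprof[OF S]] hu by simp
qed

lemma nego_val_eps_SPE_le:
  assumes G: "game Pl V E own" and S: "eps_SPE Pl V E own mu \<epsilon> u \<sigma>" and u: "u \<in> V"
  shows "nego_val Pl V E own mu u \<sigma> \<le> ereal (mu (own u) (outcome own \<sigma> u) + \<epsilon>)"
  unfolding nego_val_def
proof (rule SUP_least)
  fix \<tau> assume "\<tau> \<in> {\<tau>. is_strategy V E own (own u) u \<tau>}"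
  moreover have "own u \<in> Pl" using G u by (auto simp: game_def)
  moreover have "is_hist V E u [u]" using u by (simp add: is_hist_def)
  hence "\<forall>i\<in>Pl. \<forall>\<tau>. is_strategy V E own i (last [u]) \<tau> \<longrightarrow>
      mu i (outcome own ((subprof \<sigma> [u])(i := \<tau>)) (last [u])) \<le> mu i (outcome own (subprof \<sigma> [u]) (last [u])) + \<epsilon>"
    using S unfolding eps_SPE_def by blast
  ultimately show "ereal (mu (own u) (outcome own (\<sigma>(own u := \<tau>)) u))
      \<le> ereal (mu (own u) (outcome own \<sigma> u) + \<epsilon>)"
    by simp
qed

lemma nego_spe_requirement_le:
  assumes G: "game Pl V E own"
  shows "(\<lambda>u. nego Pl V E own mu (spe_requirement Pl V E own mu \<epsilon>) u - ereal \<epsilon>)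
      \<le> spe_requirement Pl V E own mu \<epsilon>"
proof (rule le_funI)
  fix u
  let ?P = "spe_requirement Pl V E own mu \<epsilon>"
  have "nego Pl V E own mu ?P u - ereal \<epsilon> \<le> ereal (mu (own u) (outcome own \<sigma> u))"
    if u: "u \<in> V" and S: "eps_SPE Pl V E own mu \<epsilon> u \<sigma>" for \<sigma>
  proof -
    have "nego Pl V E own mu ?P u \<le> nego_val Pl V E own mu u \<sigma>"
      unfolding nego_def by (rule INF_lower[OF eps_SPE_in_lamRat_spe_requirement[OF G S u]])
    also have "\<dots> \<le> ereal (mu (own u) (outcome own \<sigma> u) + \<epsilon>)"
      by (rule nego_val_eps_SPE_le[OF G S u])
    finally show ?thesis by (cases "nego Pl V E own mu ?P u") auto
  qed
  thus "nego Pl V E own mu ?P u - ereal \<epsilon> \<le> ?P u"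
    unfolding spe_requirement_def by (auto intro: INF_greatest)
qed

lemma least_eps_fixed_point_le_spe_requirement:
  assumes G: "game Pl V E own" and "\<epsilon> \<ge> 0"
    and least: "least_eps_fixed_point Pl V E own mu \<epsilon> lam" and v: "v \<in> V"
  shows "lam v \<le> spe_requirement Pl V E own mu \<epsilon> v"
proof -
  let ?F = "\<lambda>lam u. nego Pl V E own mu lam u - ereal \<epsilon>"
  have fp: "?F (lfp ?F) = lfp ?F" by (rule lfp_fixpoint[OF mono_nego_minus])
  have "eps_fixed_point Pl V E own mu \<epsilon> (lfp ?F)"
    unfolding eps_fixed_point_def
  proof (intro ballI conjI)
    fix v
    have Lv: "lfp ?F v = nego Pl V E own mu (lfp ?F) v - ereal \<epsilon>" using fun_cong[OF fp, of v] by simp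
    show "lfp ?F v - ereal \<epsilon> \<le> nego Pl V E own mu (lfp ?F) v"
      unfolding Lv using \<open>\<epsilon> \<ge> 0\<close> by (cases "nego Pl V E own mu (lfp ?F) v") auto
    show "nego Pl V E own mu (lfp ?F) v \<le> lfp ?F v + ereal \<epsilon>"
      unfolding Lv by (cases "nego Pl V E own mu (lfp ?F) v") auto
  qed
  hence "lam v \<le> lfp ?F v" using least v by (simp add: least_eps_fixed_point_def)
  also have "lfp ?F \<le> spe_requirement Pl V E own mu \<epsilon>"
    by (rule lfp_lowerbound) (use nego_spe_requirement_le[OF G] in simp)
  finally show ?thesis by (simp add: le_fun_def)
qed

lemma consistent_antimono:
  assumes "consistent own mu lam' \<rho>" "is_play V E \<rho>" "\<And>v. v \<in> V \<Longrightarrow> lam v \<le> lam' v"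
  shows "consistent own mu lam \<rho>"
  using assms unfolding consistent_def is_play_def by (meson order_trans)

lemma eps_SPE_outcome_consistent:
  assumes G: "game Pl V E own" and "\<epsilon> \<ge> 0"
    and least: "least_eps_fixed_point Pl V E own mu \<epsilon> lam"
    and S: "eps_SPE Pl V E own mu \<epsilon> v0 \<sigma>" and v0: "v0 \<in> V"
  shows "consistent own mu lam (outcome own \<sigma> v0)"
proof (rule consistent_antimono)
  show "consistent own mu (spe_requirement Pl V E own mu \<epsilon>) (outcome own \<sigma> v0)"
    by (rule eps_SPE_outcome_consistent_spe_requirement[OF G S v0])
  show "is_play V E (outcome own \<sigma> v0)"
    using S by (intro outcome_is_play[OF G _ v0]) (simp add: eps_SPE_def)
qed (rule least_eps_fixed_point_le_spe_requirement[OF G \<open>\<epsilon> \<ge> 0\<close> least])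

lemma compatible_snoc:
  assumes "compatible own \<sigma> i h" "h \<noteq> []" "own (last h) \<noteq> i \<longrightarrow> x = \<sigma> (own (last h)) h"
  shows "compatible own \<sigma> i (h @ [x])"
  unfolding compatible_def
proof (intro allI impI)
  fix k assume k: "Suc k < length (h @ [x])" and o: "own ((h @ [x]) ! k) \<noteq> i"
  show "(h @ [x]) ! Suc k = \<sigma> (own ((h @ [x]) ! k)) (take (Suc k) (h @ [x]))"
  proof (cases "Suc k < length h")
    case True thus ?thesis using assms(1) o by (simp add: compatible_def nth_append)
  next
    case False
    hence "k = length h - 1" using k by simp
    thus ?thesis using assms(2,3) o by (simp add: nth_append last_conv_nth)
  qed
qed

lemma compatible_pair: "compatible own \<sigma> (own a) [a, b]"
  unfolding compatible_def by (auto simp: less_Suc_eq)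

lemma compatible_hist_upto_step:
  assumes "compatible own \<sigma> i (hist_upto x m)" "n < m" "own (x n) \<noteq> i"
  shows "x (Suc n) = \<sigma> (own (x n)) (hist_upto x n)"
  using assms unfolding compatible_def by (auto simp: take_hist_upto)

lemma compatible_play_is_outcome:
  assumes x: "is_play V E x" "x 0 = w"
    and steps: "\<And>n. own (x n) \<noteq> i \<Longrightarrow> x (Suc n) = \<sigma> (own (x n)) (hist_upto x n)"
    and \<tau>: "is_strategy V E own i w \<tau>"
  obtains \<tau>' where "is_strategy V E own i w \<tau>'" "outcome own (\<sigma>(i := \<tau>')) w = x"
proof
  define \<tau>' where "\<tau>' = (\<lambda>g. if g = hist_upto x (length g - 1) then x (length g) else \<tau> g)"
  show "is_strategy V E own i w \<tau>'"
    unfolding is_strategy_def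
  proof (intro allI impI)
    fix g assume g: "is_hist V E w g \<and> own (last g) = i"
    show "(last g, \<tau>' g) \<in> E"
    proof (cases "g = hist_upto x (length g - 1)")
      case True
      have "length g = Suc (length g - 1)" using g by (cases g) (auto simp: is_hist_def)
      hence "\<tau>' g = x (Suc (length g - 1))" using True by (simp add: \<tau>'_def)
      moreover have "last g = x (length g - 1)" using True by (metis hist_upto_last)
      ultimately show ?thesis using x(1) by (simp add: is_play_def)
    next
      case False thus ?thesis using g \<tau> by (simp add: \<tau>'_def is_strategy_def)
    qed
  qed
  show "outcome own (\<sigma>(i := \<tau>')) w = x"
    unfolding outcome_eq_play_ext
  proof (rule sym, rule play_ext_unique)
    show "\<forall>m<length [w]. x m = [w] ! m" using x(2) by simp
    show "\<forall>m. length [w] \<le> Suc m \<longrightarrow> x (Suc m) = (\<sigma>(i := \<tau>')) (own (last (hist_upto x m))) (hist_upto x m)"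
      using steps by (simp add: \<tau>'_def)
  qed simp
qed

lemma antitone_from_le:
  fixes c :: "nat \<Rightarrow> 'a::linorder"
  assumes "\<forall>m\<ge>N. c (Suc m) \<le> c m" "N \<le> a" "a \<le> b"
  shows "c b \<le> c a"
  using assms(3)
proof (induction rule: dec_induct)
  case (step n) thus ?case using assms(1,2) by (meson order_trans le_trans)
qed simp

lemma antitone_finite_range_stabilizes:
  fixes c :: "nat \<Rightarrow> 'a::linorder"
  assumes "\<forall>m\<ge>N. c (Suc m) \<le> c m" "finite (c ` {N..})"
  obtains M where "M \<ge> N" "\<forall>m\<ge>M. c m = c M"
proof -
  obtain M where M: "M \<ge> N" "c M = Min (c ` {N..})"
    using Min_in[OF assms(2)] by fastforce
  have "c m = c M" if "M \<le> m" for m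
    using antitone_from_le[OF assms(1) M(1) that] M that assms(2) by (simp add: antisym)
  thus ?thesis using M(1) that by blast
qed

section \<open>Constructing an \<open>\<epsilon>\<close>-SPE from a consistent play\<close>

locale consistent_play =
  fixes Pl :: "'p set" and V :: "'v set" and E :: "('v \<times> 'v) set" and own :: "'v \<Rightarrow> 'p"
    and mu :: "'p \<Rightarrow> (nat \<Rightarrow> 'v) \<Rightarrow> real" and \<epsilon> :: real
    and lam :: "'v \<Rightarrow> ereal" and \<theta> :: "nat \<Rightarrow> 'v" and v0 :: 'v
  assumes game: "game Pl V E own" and finite_V: "finite V"
    and prefix_independent: "prefix_independent Pl V E mu"
    and eps_nonneg: "\<epsilon> \<ge> 0"
    and nego_le: "\<And>v. v \<in> V \<Longrightarrow> nego Pl V E own mu lam v \<le> lam v + ereal \<epsilon>"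
    and steady: "steady_negotiation Pl V E own mu"
    and \<theta>_play: "is_play V E \<theta>" and \<theta>_0: "\<theta> 0 = v0"
    and \<theta>_consistent: "consistent own mu lam \<theta>"
begin

abbreviation rat_env :: "'v \<Rightarrow> ('p \<Rightarrow> 'v list \<Rightarrow> 'v) set" where
  "rat_env w \<equiv> lamRat Pl V E own mu lam w"

abbreviation nego_lam :: "'v \<Rightarrow> ereal" where
  "nego_lam w \<equiv> nego Pl V E own mu lam w"

definition punish_env :: "'v \<Rightarrow> 'p \<Rightarrow> 'v list \<Rightarrow> 'v" where
  "punish_env w = (SOME \<sigma>. \<sigma> \<in> rat_env w \<and> nego_val Pl V E own mu w \<sigma> = nego_lam w)"

definition rational_response :: "'v \<Rightarrow> ('v list \<Rightarrow> 'v) \<Rightarrow> bool" where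
  "rational_response w \<tau> \<longleftrightarrow> is_strategy V E own (own w) w \<tau> \<and>
     (\<forall>hu. is_hist V E w hu \<and> compatible own (punish_env w) (own w) hu \<longrightarrow>
        consistent own mu lam (outcome own (subprof ((punish_env w)(own w := \<tau>)) hu) (last hu)))"

definition response :: "'v \<Rightarrow> 'v list \<Rightarrow> 'v" where
  "response w = (SOME \<tau>. rational_response w \<tau>)"

definition punish :: "'v \<Rightarrow> 'p \<Rightarrow> 'v list \<Rightarrow> 'v" where
  "punish w = (punish_env w)(own w := response w)"

lemma punish_env_rat_env:
  assumes "w \<in> V" "rat_env w \<noteq> {}"
  shows "punish_env w \<in> rat_env w" "nego_val Pl V E own mu w (punish_env w) = nego_lam w"
proof -
  have "\<exists>\<sigma>. \<sigma> \<in> rat_env w \<and> nego_val Pl V E own mu w \<sigma> = nego_lam w"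
    using steady assms unfolding steady_negotiation_def by blast
  from someI_ex[OF this] show "punish_env w \<in> rat_env w" "nego_val Pl V E own mu w (punish_env w) = nego_lam w"
    unfolding punish_env_def by auto
qed

lemma rational_response_response:
  assumes "w \<in> V" "rat_env w \<noteq> {}"
  shows "rational_response w (response w)"
proof -
  have "\<exists>\<tau>. rational_response w \<tau>"
    using punish_env_rat_env(1)[OF assms] unfolding lamRat_def rational_response_def by blast
  thus ?thesis unfolding response_def by (rule someI_ex)
qed

lemma punish_env_strategy:
  assumes "w \<in> V" "rat_env w \<noteq> {}" "j \<in> Pl" "j \<noteq> own w"
  shows "is_strategy V E own j w (punish_env w j)"
  using punish_env_rat_env(1)[OF assms(1,2)] assms(3,4) unfolding lamRat_def by blast

lemma rat_env_nonempty:
  assumes "w \<in> V" "lam w \<le> ereal r"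
  shows "rat_env w \<noteq> {}"
proof
  assume "rat_env w = {}"
  hence "nego_lam w = \<infinity>" unfolding nego_def by (simp add: top_ereal_def)
  moreover have "lam w + ereal \<epsilon> \<le> ereal (r + \<epsilon>)" using assms(2) by (cases "lam w") auto
  ultimately show False using nego_le[OF assms(1)] by simp
qed

text \<open>
  The profile is a single move function \<open>strat\<close> for all players, driven by the anchor of the
  history: \<open>None\<close> while the history is a prefix of \<open>\<theta>\<close>, and \<open>Some k\<close> when \<open>punish (h ! k)\<close> is
  being played in the subgame starting at position \<open>k\<close>. After an unexpected move, the anchor
  moves to the deviation vertex unless the deviator is already punished from a vertex of no larger
  negotiation value; so a player who keeps deviating can only lower the negotiation value at the
  anchor.
\<close>

definition next_move :: "nat option \<Rightarrow> 'v list \<Rightarrow> 'v" where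
  "next_move a h = (case a of None \<Rightarrow> \<theta> (length h) | Some k \<Rightarrow> punish (h ! k) (own (last h)) (drop k h))"

definition anchor_step :: "nat option \<Rightarrow> 'v list \<Rightarrow> 'v \<Rightarrow> nat option" where
  "anchor_step a h x = (if x = next_move a h then a else
     (case a of None \<Rightarrow> Some (length h - 1)
      | Some k \<Rightarrow> if own (h ! k) = own (last h) \<and> nego_lam (h ! k) \<le> nego_lam (last h) then Some k
                  else Some (length h - 1)))"

primrec anchor_upto :: "'v list \<Rightarrow> nat \<Rightarrow> nat option" where
  "anchor_upto h 0 = None"
| "anchor_upto h (Suc n) = anchor_step (anchor_upto h n) (take (Suc n) h) (h ! Suc n)"

definition anchor :: "'v list \<Rightarrow> nat option" where
  "anchor h = anchor_upto h (length h - 1)"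

definition strat :: "'v list \<Rightarrow> 'v" where
  "strat h = next_move (anchor h) h"

lemma anchor_upto_append: "n < length h \<Longrightarrow> anchor_upto (h @ ys) n = anchor_upto h n"
  by (induction n) (auto simp: nth_append)

lemma anchor_snoc:
  assumes "h \<noteq> []"
  shows "anchor (h @ [x]) = anchor_step (anchor h) h x"
proof -
  obtain n where n: "length h = Suc n" using assms by (cases h) auto
  hence "anchor (h @ [x]) = anchor_step (anchor_upto (h @ [x]) n) h x" by (simp add: anchor_def nth_append)
  thus ?thesis using n anchor_upto_append[of n h "[x]"] by (simp add: anchor_def)
qed

lemma anchor_single[simp]: "anchor [v] = None"
  by (simp add: anchor_def)

lemma anchor_hist_upto_\<theta>: "anchor (hist_upto \<theta> m) = None"
proof (induction m)
  case 0 thus ?case by (simp add: hist_upto_def)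
next
  case (Suc m)
  have "next_move None (hist_upto \<theta> m) = \<theta> (Suc m)" by (simp add: next_move_def)
  thus ?case using Suc anchor_snoc[of "hist_upto \<theta> m" "\<theta> (Suc m)"] by (simp add: hist_upto_Suc anchor_step_def)
qed

lemma play_ext_strat_\<theta>:
  assumes "h \<noteq> []" "\<forall>m<length h. h ! m = \<theta> m"
  shows "play_ext strat h = \<theta>"
  by (rule sym, rule play_ext_unique) (use assms in \<open>simp_all add: strat_def anchor_hist_upto_\<theta> next_move_def\<close>)

lemma anchor_hist_upto_play_ext_strat:
  assumes "g \<noteq> []" "length g \<le> Suc m"
  shows "anchor (hist_upto (play_ext strat g) m) = anchor g"
  using assms(2)
proof (induction m)
  case 0
  hence "length g = 1" using assms(1) by (cases g) auto
  thus ?case using assms(1) by (simp add: hist_upto_play_ext_less)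
next
  case (Suc m)
  show ?case
  proof (cases "length g \<le> Suc m")
    case True
    let ?h = "hist_upto (play_ext strat g) m"
    have "hist_upto (play_ext strat g) (Suc m) = ?h @ [strat ?h]"
      using True by (simp add: hist_upto_Suc play_ext_Suc)
    hence "anchor (hist_upto (play_ext strat g) (Suc m)) = anchor ?h"
      by (simp add: anchor_snoc anchor_step_def strat_def)
    thus ?thesis using Suc True by simp
  next
    case False
    hence "length g = Suc (Suc m)" using Suc by simp
    thus ?thesis by (simp add: hist_upto_play_ext_less)
  qed
qed

definition anchor_inv :: "'v list \<Rightarrow> bool" where
  "anchor_inv h \<longleftrightarrow> (anchor h = None \<longrightarrow> (\<forall>m<length h. h ! m = \<theta> m)) \<and>
    (\<forall>k. anchor h = Some k \<longrightarrow> Suc k < length h \<and> h ! k \<in> V \<and> rat_env (h ! k) \<noteq> {} \<and>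
        compatible own (punish_env (h ! k)) (own (h ! k)) (drop k h))"

lemma play_ext_strat_anchored:
  assumes "h \<noteq> []" "anchor h = Some k" "k < length h"
  shows "play_ext strat h = play_ext (\<lambda>g. punish (h ! k) (own (last g)) (drop k g)) h"
proof (rule sym, rule play_ext_cong)
  show "\<forall>m. length h \<le> Suc m \<longrightarrow> strat (hist_upto (play_ext strat h) m)
      = punish (h ! k) (own (last (hist_upto (play_ext strat h) m))) (drop k (hist_upto (play_ext strat h) m))"
  proof (intro allI impI)
    fix m assume m: "length h \<le> Suc m"
    have "anchor (hist_upto (play_ext strat h) m) = Some k"
      using anchor_hist_upto_play_ext_strat[OF assms(1) m] assms(2) by simp
    moreover have "hist_upto (play_ext strat h) m ! k = h ! k" using m assms(3) by (simp add: play_ext_less)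
    ultimately show "strat (hist_upto (play_ext strat h) m)
      = punish (h ! k) (own (last (hist_upto (play_ext strat h) m))) (drop k (hist_upto (play_ext strat h) m))"
      by (simp add: strat_def next_move_def)
  qed
qed fact

lemma requirement_le_strat_continuation:
  assumes H: "is_hist V E v0 h" and I: "anchor_inv h"
  shows "lam (last h) \<le> ereal (mu (own (last h)) (\<lambda>n. play_ext strat h (length h - 1 + n)))"
proof -
  have ne: "h \<noteq> []" using H by (simp add: is_hist_def)
  show ?thesis
  proof (cases "anchor h")
    case None
    hence "\<forall>m<length h. h ! m = \<theta> m" using I by (simp add: anchor_inv_def)
    moreover from this have "last h = \<theta> (length h - 1)" using ne by (simp add: last_conv_nth)
    ultimately show ?thesis using \<theta>_consistent play_ext_strat_\<theta>[OF ne] unfolding consistent_def by simp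
  next
    case (Some k)
    let ?w = "h ! k" and ?hu = "drop k h"
    let ?P = "\<lambda>g. punish ?w (own (last g)) g"
    have k: "Suc k < length h" "?w \<in> V" "rat_env ?w \<noteq> {}" "compatible own (punish_env ?w) (own ?w) ?hu"
      using I Some by (auto simp: anchor_inv_def)
    have hu: "is_hist V E ?w ?hu" using is_hist_drop[OF H] k(1) by simp
    hence "consistent own mu lam (outcome own (subprof (punish ?w) ?hu) (last ?hu))"
      using rational_response_response[OF k(2,3)] k(4) unfolding rational_response_def punish_def by blast
    also have "outcome own (subprof (punish ?w) ?hu) (last ?hu) = (\<lambda>n. play_ext ?P ?hu (length ?hu - 1 + n))"
      using k(1) by (intro outcome_subprof) simp
    finally have C: "consistent own mu lam (\<lambda>n. play_ext ?P ?hu (length ?hu - 1 + n))" .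
    have "play_ext strat h = play_ext (\<lambda>g. ?P (drop k g)) h"
    proof -
      have "play_ext (\<lambda>g. ?P (drop k g)) h = play_ext (\<lambda>g. punish ?w (own (last g)) (drop k g)) h"
        by (rule play_ext_cong) (use ne k(1) in auto)
      thus ?thesis using play_ext_strat_anchored[OF ne Some] k(1) by simp
    qed
    hence "play_ext strat h (k + j) = play_ext ?P ?hu j" for j
      using play_ext_drop[of k h ?P] k(1) by (metis Suc_lessD)
    moreover have "length h - 1 = k + (length ?hu - 1)" using k(1) by simp
    ultimately have eqn: "play_ext strat h (length h - 1 + n) = play_ext ?P ?hu (length ?hu - 1 + n)" for n
      by (simp add: add.assoc)
    have "lam (play_ext ?P ?hu (length ?hu - 1 + 0))
        \<le> ereal (mu (own (play_ext ?P ?hu (length ?hu - 1 + 0))) (\<lambda>n. play_ext ?P ?hu (length ?hu - 1 + (0 + n))))"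
      using C unfolding consistent_def by blast
    moreover have "play_ext ?P ?hu (length ?hu - 1) = last h"
      using k(1) ne by (simp add: play_ext_less last_conv_nth)
    ultimately show ?thesis using eqn by simp
  qed
qed

lemma anchor_inv_snoc_keep:
  assumes I: "anchor_inv h" and k: "anchor h = Some k" "anchor (h @ [x]) = Some k"
    and move: "own (last h) \<noteq> own (h ! k) \<longrightarrow> x = punish_env (h ! k) (own (last h)) (drop k h)"
  shows "anchor_inv (h @ [x])"
proof -
  have "Suc k < length h" "h ! k \<in> V" "rat_env (h ! k) \<noteq> {}"
    and c: "compatible own (punish_env (h ! k)) (own (h ! k)) (drop k h)"
    using I k(1) by (auto simp: anchor_inv_def)
  moreover have "compatible own (punish_env (h ! k)) (own (h ! k)) (drop k h @ [x])"
    by (rule compatible_snoc[OF c]) (use \<open>Suc k < length h\<close> move in auto)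
  ultimately show ?thesis using k(2) by (simp add: anchor_inv_def nth_append)
qed

lemma anchor_inv_snoc_restart:
  assumes H: "is_hist V E v0 h" and I: "anchor_inv h" and a: "anchor (h @ [x]) = Some (length h - 1)"
  shows "anchor_inv (h @ [x])"
proof -
  have ne: "h \<noteq> []" using H by (simp add: is_hist_def)
  have "last h \<in> V" using H ne by (auto simp: is_hist_def)
  moreover have "rat_env (last h) \<noteq> {}"
    by (rule rat_env_nonempty[OF \<open>last h \<in> V\<close> requirement_le_strat_continuation[OF H I]])
  moreover have "(h @ [x]) ! (length h - 1) = last h" using ne by (simp add: nth_append last_conv_nth)
  moreover have "drop (length h - 1) (h @ [x]) = [last h, x]" using ne by (cases h rule: rev_cases) auto
  ultimately show ?thesis using a ne compatible_pair[of own "punish_env (last h)" "last h" x]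
    by (simp add: anchor_inv_def)
qed

lemma anchor_inv_snoc:
  assumes H: "is_hist V E v0 h" and I: "anchor_inv h"
  shows "anchor_inv (h @ [x])"
proof -
  have ne: "h \<noteq> []" using H by (simp add: is_hist_def)
  have a: "anchor (h @ [x]) = anchor_step (anchor h) h x" by (rule anchor_snoc[OF ne])
  show ?thesis
  proof (cases "x = next_move (anchor h) h")
    case True
    hence same: "anchor (h @ [x]) = anchor h" using a by (simp add: anchor_step_def)
    show ?thesis
    proof (cases "anchor h")
      case None
      moreover have "x = \<theta> (length h)" using True None by (simp add: next_move_def)
      ultimately show ?thesis using I same by (auto simp: anchor_inv_def nth_append less_Suc_eq)
    next
      case (Some k)
      thus ?thesis using anchor_inv_snoc_keep[OF I Some] True same by (simp add: next_move_def punish_def)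
    qed
  next
    case off: False
    show ?thesis
    proof (cases "anchor h")
      case None
      hence "anchor (h @ [x]) = Some (length h - 1)" using a off by (simp add: anchor_step_def)
      thus ?thesis by (rule anchor_inv_snoc_restart[OF H I])
    next
      case (Some k)
      show ?thesis
      proof (cases "own (h ! k) = own (last h) \<and> nego_lam (h ! k) \<le> nego_lam (last h)")
        case True
        hence "anchor (h @ [x]) = Some k" using a off Some by (simp add: anchor_step_def)
        thus ?thesis using anchor_inv_snoc_keep[OF I Some] True by simp
      next
        case False
        hence "anchor (h @ [x]) = Some (length h - 1)" using a off Some by (auto simp: anchor_step_def)
        thus ?thesis by (rule anchor_inv_snoc_restart[OF H I])
      qed
    qed
  qed
qed

lemma anchor_inv_hist: "is_hist V E v0 h \<Longrightarrow> anchor_inv h"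
proof (induction h rule: rev_induct)
  case Nil thus ?case by (simp add: is_hist_def)
next
  case (snoc x h)
  show ?case
  proof (cases "h = []")
    case True
    thus ?thesis using snoc.prems \<theta>_0 by (simp add: is_hist_def anchor_inv_def)
  next
    case False
    hence "is_hist V E v0 h" using snoc.prems by (simp add: is_hist_snoc)
    thus ?thesis using anchor_inv_snoc snoc.IH by simp
  qed
qed

lemma strat_move_edge:
  assumes H: "is_hist V E v0 h"
  shows "(last h, strat h) \<in> E"
proof -
  have I: "anchor_inv h" by (rule anchor_inv_hist[OF H])
  have ne: "h \<noteq> []" using H by (simp add: is_hist_def)
  show ?thesis
  proof (cases "anchor h")
    case None
    hence "\<forall>m<length h. h ! m = \<theta> m" using I by (simp add: anchor_inv_def)
    hence "last h = \<theta> (length h - 1)" using ne by (simp add: last_conv_nth)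
    moreover have "strat h = \<theta> (Suc (length h - 1))" using None ne by (simp add: strat_def next_move_def)
    ultimately show ?thesis using \<theta>_play by (simp add: is_play_def)
  next
    case (Some k)
    let ?w = "h ! k"
    have k: "Suc k < length h" "?w \<in> V" "rat_env ?w \<noteq> {}"
      using I Some by (auto simp: anchor_inv_def)
    have hu: "is_hist V E ?w (drop k h)" using is_hist_drop[OF H] k(1) by simp
    have "last (drop k h) = last h" using k(1) by simp
    moreover have "own (last h) \<in> Pl" using game H ne last_in_set by (fastforce simp: is_hist_def game_def)
    moreover have "strat h = punish ?w (own (last h)) (drop k h)" using Some by (simp add: strat_def next_move_def)
    moreover have "(last h, punish ?w (own (last h)) (drop k h)) \<in> E"
    proof (cases "own (last h) = own ?w")
      case True
      have "is_strategy V E own (own ?w) ?w (response ?w)"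
        using rational_response_response[OF k(2,3)] by (simp add: rational_response_def)
      thus ?thesis using hu True \<open>last (drop k h) = last h\<close> unfolding is_strategy_def punish_def by auto
    next
      case False
      have "is_strategy V E own (own (last h)) ?w (punish_env ?w (own (last h)))"
        by (rule punish_env_strategy[OF k(2,3) \<open>own (last h) \<in> Pl\<close> False])
      thus ?thesis using hu False \<open>last (drop k h) = last h\<close> unfolding is_strategy_def punish_def by auto
    qed
    ultimately show ?thesis by simp
  qed
qed

lemma anchor_hist_upto_less:
  assumes "is_play V E \<rho>" "\<rho> 0 = v0" "anchor (hist_upto \<rho> m) = Some k"
  shows "k < m"
proof -
  have "is_hist V E v0 (hist_upto \<rho> m)" using is_hist_hist_upto[OF assms(1)] assms(2) by simp
  hence "anchor_inv (hist_upto \<rho> m)" by (rule anchor_inv_hist)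
  thus ?thesis using assms(3) by (simp add: anchor_inv_def)
qed

lemma anchor_hist_upto_Suc:
  "anchor (hist_upto \<rho> (Suc m)) = anchor_step (anchor (hist_upto \<rho> m)) (hist_upto \<rho> m) (\<rho> (Suc m))"
  by (simp add: hist_upto_Suc anchor_snoc)

lemma anchor_hist_upto_off_plan:
  assumes \<rho>: "is_play V E \<rho>" "\<rho> 0 = v0" and off: "\<rho> (Suc m) \<noteq> strat (hist_upto \<rho> m)"
  obtains k where "anchor (hist_upto \<rho> (Suc m)) = Some k" "own (\<rho> k) = own (\<rho> m)"
    "nego_lam (\<rho> k) \<le> nego_lam (\<rho> m)"
proof (cases "anchor (hist_upto \<rho> m)")
  case None
  thus ?thesis using that off anchor_hist_upto_Suc by (simp add: anchor_step_def strat_def)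
next
  case (Some k)
  have "k < m" by (rule anchor_hist_upto_less[OF \<rho> Some])
  thus ?thesis using that off Some anchor_hist_upto_Suc[of \<rho> m]
    by (auto simp: anchor_step_def strat_def split: if_splits)
qed

lemma anchor_hist_upto_punished:
  assumes \<rho>: "is_play V E \<rho>" "\<rho> 0 = v0" and a: "anchor (hist_upto \<rho> m) = Some k" "own (\<rho> k) = i"
    and dev: "\<rho> (Suc m) \<noteq> strat (hist_upto \<rho> m) \<longrightarrow> own (\<rho> m) = i"
  shows "anchor (hist_upto \<rho> (Suc m)) = Some k \<or>
    (anchor (hist_upto \<rho> (Suc m)) = Some m \<and> own (\<rho> m) = i \<and> nego_lam (\<rho> m) < nego_lam (\<rho> k))"
proof -
  have "k < m" by (rule anchor_hist_upto_less[OF \<rho> a(1)])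
  thus ?thesis using a dev anchor_hist_upto_Suc[of \<rho> m]
    by (auto simp: anchor_step_def strat_def split: if_splits)
qed

lemma anchor_stabilizes:
  assumes \<rho>: "is_play V E \<rho>" "\<rho> 0 = v0"
    and dev: "\<And>m. m \<ge> N \<Longrightarrow> \<rho> (Suc m) \<noteq> strat (hist_upto \<rho> m) \<Longrightarrow> own (\<rho> m) = i"
    and start: "anchor (hist_upto \<rho> N) = Some k" "own (\<rho> k) = i"
  obtains K M where "M \<ge> N" "\<And>m. m \<ge> M \<Longrightarrow> anchor (hist_upto \<rho> m) = Some K"
    "own (\<rho> K) = i" "nego_lam (\<rho> K) \<le> nego_lam (\<rho> k)"
proof -
  define b where "b m = the (anchor (hist_upto \<rho> m))" for m
  define c where "c m = nego_lam (\<rho> (b m))" for m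
  have advance: "anchor (hist_upto \<rho> (Suc m)) = Some (b (Suc m)) \<and> own (\<rho> (b (Suc m))) = i \<and>
      c (Suc m) \<le> c m \<and> (b (Suc m) \<noteq> b m \<longrightarrow> c (Suc m) < c m)"
    if "m \<ge> N" "anchor (hist_upto \<rho> m) = Some (b m)" "own (\<rho> (b m)) = i" for m
    using anchor_hist_upto_punished[OF \<rho> that(2,3)] dev[OF that(1)] that(3)
    by (auto simp: b_def c_def less_imp_le)
  have punished: "anchor (hist_upto \<rho> m) = Some (b m) \<and> own (\<rho> (b m)) = i" if "m \<ge> N" for m
    using that
  proof (induction rule: dec_induct)
    case base thus ?case using start by (simp add: b_def)
  next
    case (step m) thus ?case using advance[OF step.hyps(1)] by blast
  qed
  have anti: "\<forall>m\<ge>N. c (Suc m) \<le> c m" using advance punished by blast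
  have "c ` {N..} \<subseteq> nego_lam ` V" using \<rho>(1) by (auto simp: c_def is_play_def)
  hence "finite (c ` {N..})" using finite_V finite_subset by blast
  then obtain M where M: "M \<ge> N" "\<forall>m\<ge>M. c m = c M"
    using antitone_finite_range_stabilizes[OF anti] by blast
  have const: "b m = b M" if "M \<le> m" for m
    using that
  proof (induction rule: dec_induct)
    case (step n)
    hence "c (Suc n) = c n" using M(2) by (metis le_SucI)
    thus ?case using advance[of n] step M(1) punished[of n] by (metis order_trans less_irrefl)
  qed simp
  show ?thesis
  proof
    show "anchor (hist_upto \<rho> m) = Some (b M)" if "m \<ge> M" for m
      using punished[of m] const[OF that] that M(1) by simp
    show "own (\<rho> (b M)) = i" using punished M(1) by simp
    have "c M \<le> c N" by (rule antitone_from_le[OF anti order_refl M(1)])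
    thus "nego_lam (\<rho> (b M)) \<le> nego_lam (\<rho> k)" using start by (simp add: c_def b_def)
  qed (rule M(1))
qed

lemma payoff_le_nego_of_stable_anchor:
  assumes \<rho>: "is_play V E \<rho>" "\<rho> 0 = v0" and stable: "\<And>m. m \<ge> M \<Longrightarrow> anchor (hist_upto \<rho> m) = Some K"
  shows "ereal (mu (own (\<rho> K)) (\<lambda>j. \<rho> (K + j))) \<le> nego_lam (\<rho> K)"
proof -
  let ?w = "\<rho> K" and ?x = "\<lambda>j. \<rho> (K + j)"
  have inv: "anchor_inv (hist_upto \<rho> m)" for m
    using anchor_inv_hist is_hist_hist_upto[OF \<rho>(1)] \<rho>(2) by simp
  have KM: "K < M" using anchor_hist_upto_less[OF \<rho> stable] by simp
  have w: "?w \<in> V" "rat_env ?w \<noteq> {}" using inv[of M] stable[of M] KM by (auto simp: anchor_inv_def)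
  have compat: "compatible own (punish_env ?w) (own ?w) (hist_upto ?x n)" if "K + n \<ge> M" for n
    using inv[of "K + n"] stable[OF that] by (simp add: anchor_inv_def drop_hist_upto)
  have steps: "?x (Suc n) = punish_env ?w (own (?x n)) (hist_upto ?x n)" if "own (?x n) \<noteq> own ?w" for n
    by (rule compatible_hist_upto_step[OF compat[of "M + Suc n"]]) (use that in simp_all)
  have "is_play V E ?x" using \<rho>(1) by (simp add: is_play_def)
  moreover have "is_strategy V E own (own ?w) ?w (response ?w)"
    using rational_response_response[OF w] by (simp add: rational_response_def)
  ultimately obtain \<tau> where \<tau>: "is_strategy V E own (own ?w) ?w \<tau>"
    and out: "outcome own ((punish_env ?w)(own ?w := \<tau>)) ?w = ?x"
    using compatible_play_is_outcome[of V E ?x ?w own "own ?w" "punish_env ?w"] steps by auto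
  have "ereal (mu (own ?w) ?x) \<le> nego_val Pl V E own mu ?w (punish_env ?w)"
    unfolding nego_val_def using \<tau> by (subst out[symmetric]) (rule SUP_upper, simp)
  also have "\<dots> = nego_lam ?w" by (rule punish_env_rat_env(2)[OF w])
  finally show ?thesis .
qed

lemma deviation_play_is_play:
  assumes hv: "is_hist V E v0 hv" and \<tau>: "is_strategy V E own i (last hv) \<tau>"
  shows "is_play V E (play_ext (\<lambda>h. if own (last h) = i then \<tau> (drop (length hv - 1) h) else strat h) hv)"
    (is "is_play V E (play_ext ?G hv)")
proof (rule is_play_if_hist_upto[OF play_ext_is_hist[OF hv]])
  show "E \<subseteq> V \<times> V" using game by (simp add: game_def)
  fix h assume h: "is_hist V E v0 h" "take (length hv) h = hv" "length hv \<le> length h"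
  show "(last h, ?G h) \<in> E"
  proof (cases "own (last h) = i")
    case True
    have ne: "hv \<noteq> []" using hv by (simp add: is_hist_def)
    hence "length hv - 1 < length h" using h(3) by (cases hv) auto
    moreover have "h ! (length hv - 1) = last hv"
      using h(2) ne by (metis diff_less last_conv_nth length_greater_0_conv less_one nth_take)
    ultimately have "is_hist V E (last hv) (drop (length hv - 1) h)"
      using is_hist_drop[OF h(1)] by metis
    moreover have "last (drop (length hv - 1) h) = last h" using \<open>length hv - 1 < length h\<close> by simp
    ultimately show ?thesis using \<tau> True unfolding is_strategy_def by auto
  next
    case False thus ?thesis using strat_move_edge[OF h(1)] by simp
  qed
qed

lemma play_ext_strat_is_play:
  assumes hv: "is_hist V E v0 hv"
  shows "is_play V E (play_ext strat hv)" "play_ext strat hv 0 = v0"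
proof -
  show "is_play V E (play_ext strat hv)"
    using is_play_if_hist_upto[OF play_ext_is_hist[OF hv strat_move_edge]] game by (simp add: game_def)
  show "play_ext strat hv 0 = v0"
    using hv by (cases hv) (auto simp: play_ext_less is_hist_def)
qed

lemma persistent_deviator_payoff_le:
  assumes \<rho>: "is_play V E \<rho>" "\<rho> 0 = v0" and i: "i \<in> Pl"
    and off: "\<rho> (Suc m) \<noteq> strat (hist_upto \<rho> m)"
    and only_i: "\<And>n. n \<ge> m \<Longrightarrow> \<rho> (Suc n) \<noteq> strat (hist_upto \<rho> n) \<Longrightarrow> own (\<rho> n) = i"
  shows "mu i \<rho> \<le> mu i (play_ext strat (hist_upto \<rho> m)) + \<epsilon>"
proof -
  let ?h = "hist_upto \<rho> m"
  have mu_shift: "mu i (\<lambda>n. x (n' + n)) = mu i x" if "is_play V E x" for x n'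
    using prefix_independent i that unfolding prefix_independent_def by blast
  have H: "is_hist V E v0 ?h" using is_hist_hist_upto[OF \<rho>(1)] \<rho>(2) by simp
  have own_m: "own (\<rho> m) = i" using only_i[OF order_refl off] .
  have "lam (\<rho> m) \<le> ereal (mu i (\<lambda>n. play_ext strat ?h (m + n)))"
    using requirement_le_strat_continuation[OF H anchor_inv_hist[OF H]] own_m by simp
  hence req: "lam (\<rho> m) \<le> ereal (mu i (play_ext strat ?h))"
    using mu_shift[OF play_ext_strat_is_play(1)[OF H]] by simp
  obtain k where k: "anchor (hist_upto \<rho> (Suc m)) = Some k" "own (\<rho> k) = own (\<rho> m)"
    "nego_lam (\<rho> k) \<le> nego_lam (\<rho> m)"
    by (rule anchor_hist_upto_off_plan[OF \<rho> off])
  obtain K M where M: "\<And>n. n \<ge> M \<Longrightarrow> anchor (hist_upto \<rho> n) = Some K"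
    and K: "own (\<rho> K) = i" "nego_lam (\<rho> K) \<le> nego_lam (\<rho> k)"
    by (rule anchor_stabilizes[OF \<rho> _ k(1)]) (use only_i k(2) own_m in auto)
  have "ereal (mu i \<rho>) = ereal (mu i (\<lambda>j. \<rho> (K + j)))" using mu_shift[OF \<rho>(1)] by simp
  also have "\<dots> \<le> nego_lam (\<rho> K)" using payoff_le_nego_of_stable_anchor[OF \<rho> M] K(1) by simp
  also have "\<dots> \<le> nego_lam (\<rho> m)" using K(2) k(3) by (rule order_trans)
  also have "\<dots> \<le> lam (\<rho> m) + ereal \<epsilon>" using nego_le \<rho>(1) by (simp add: is_play_def)
  also have "\<dots> \<le> ereal (mu i (play_ext strat ?h)) + ereal \<epsilon>" using req by (rule add_right_mono)
  finally show ?thesis by simp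
qed

lemma strat_deviation_payoff_le:
  assumes hv: "is_hist V E v0 hv" and i: "i \<in> Pl" and \<tau>: "is_strategy V E own i (last hv) \<tau>"
  shows "mu i (outcome own ((subprof (\<lambda>j. strat) hv)(i := \<tau>)) (last hv))
           \<le> mu i (outcome own (subprof (\<lambda>j. strat) hv) (last hv)) + \<epsilon>"
proof -
  have ne: "hv \<noteq> []" using hv by (simp add: is_hist_def)
  define k0 where "k0 = length hv - 1"
  define G where "G = (\<lambda>h. if own (last h) = i then \<tau> (drop k0 h) else strat h)"
  define \<rho> where "\<rho> = play_ext G hv"
  define \<rho>s where "\<rho>s = play_ext strat hv"
  have mu_shift: "mu i (\<lambda>n. x (k0 + n)) = mu i x" if "is_play V E x" for x
    using prefix_independent i that unfolding prefix_independent_def by blast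
  have \<rho>: "is_play V E \<rho>" "\<rho> 0 = v0"
    unfolding \<rho>_def G_def k0_def using deviation_play_is_play[OF hv \<tau>] apply assumption
    using hv ne by (simp add: play_ext_less hd_conv_nth is_hist_def)
  have "mu i \<rho> \<le> mu i \<rho>s + \<epsilon>"
  proof (cases "\<rho> = \<rho>s")
    case True thus ?thesis using eps_nonneg by simp
  next
    case False
    then obtain m where m: "length hv \<le> Suc m" "G (hist_upto \<rho> m) \<noteq> strat (hist_upto \<rho> m)"
      and cont: "play_ext strat (hist_upto \<rho> m) = \<rho>s"
      unfolding \<rho>_def \<rho>s_def by (rule play_ext_first_divergence[OF ne])
    have \<rho>_Suc: "\<rho> (Suc n) = G (hist_upto \<rho> n)" if "length hv \<le> Suc n" for n
      using that by (simp add: \<rho>_def play_ext_Suc)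
    have "own (\<rho> n) = i" if "n \<ge> m" "\<rho> (Suc n) \<noteq> strat (hist_upto \<rho> n)" for n
      using that m(1) \<rho>_Suc[of n] by (auto simp: G_def split: if_splits)
    thus ?thesis using persistent_deviator_payoff_le[OF \<rho> i, of m] m \<rho>_Suc cont by simp
  qed
  moreover have "outcome own ((subprof (\<lambda>j. strat) hv)(i := \<tau>)) (last hv) = (\<lambda>n. \<rho> (k0 + n))"
    unfolding \<rho>_def G_def k0_def by (rule outcome_subprof_upd[OF ne])
  moreover have "outcome own (subprof (\<lambda>j. strat) hv) (last hv) = (\<lambda>n. \<rho>s (k0 + n))"
    unfolding \<rho>s_def k0_def by (rule outcome_subprof[OF ne])
  ultimately show ?thesis using mu_shift[OF \<rho>(1)] mu_shift[OF play_ext_strat_is_play(1)[OF hv]]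
    by (simp add: \<rho>s_def)
qed

lemma strat_eps_SPE: "eps_SPE Pl V E own mu \<epsilon> v0 (\<lambda>j. strat)"
  unfolding eps_SPE_def
proof (intro conjI allI impI ballI)
  show "is_profile Pl V E own v0 (\<lambda>j. strat)"
    unfolding is_profile_def is_strategy_def using strat_move_edge by blast
qed (rule strat_deviation_payoff_le)

lemma outcome_strat: "outcome own (\<lambda>j. strat) v0 = \<theta>"
  unfolding outcome_eq_play_ext by (rule play_ext_strat_\<theta>) (use \<theta>_0 in auto)

end

theorem mainTheorem4:
  fixes Pl :: "'p set" and V :: "'v set" and E :: "('v \<times> 'v) set" and own :: "'v \<Rightarrow> 'p"
    and mu :: "'p \<Rightarrow> (nat \<Rightarrow> 'v) \<Rightarrow> real" and \<epsilon> :: real and v0 :: 'v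
    and lam :: "'v \<Rightarrow> ereal" and \<theta> :: "nat \<Rightarrow> 'v"
  assumes "game Pl V E own" and "finite V"
    and "prefix_independent Pl V E mu"
    and "v0 \<in> V" and "\<epsilon> \<ge> 0"
    and "least_eps_fixed_point Pl V E own mu \<epsilon> lam"
    and "is_play V E \<theta>" and "\<theta> 0 = v0"
  shows "((\<exists>\<sigma>. eps_SPE Pl V E own mu \<epsilon> v0 \<sigma> \<and> outcome own \<sigma> v0 = \<theta>) \<longrightarrow> consistent own mu lam \<theta>)
    \<and> (steady_negotiation Pl V E own mu \<longrightarrow> consistent own mu lam \<theta> \<longrightarrow>
         (\<exists>\<sigma>. eps_SPE Pl V E own mu \<epsilon> v0 \<sigma> \<and> outcome own \<sigma> v0 = \<theta>))"
proof (intro conjI impI)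
  assume "\<exists>\<sigma>. eps_SPE Pl V E own mu \<epsilon> v0 \<sigma> \<and> outcome own \<sigma> v0 = \<theta>"
  thus "consistent own mu lam \<theta>" using eps_SPE_outcome_consistent[OF assms(1,5,6) _ assms(4)] by blast
next
  assume "steady_negotiation Pl V E own mu" "consistent own mu lam \<theta>"
  moreover have "nego Pl V E own mu lam v \<le> lam v + ereal \<epsilon>" if "v \<in> V" for v
    using assms(6) that by (simp add: least_eps_fixed_point_def eps_fixed_point_def)
  ultimately interpret consistent_play Pl V E own mu \<epsilon> lam \<theta> v0
    using assms by unfold_locales auto
  show "\<exists>\<sigma>. eps_SPE Pl V E own mu \<epsilon> v0 \<sigma> \<and> outcome own \<sigma> v0 = \<theta>"
    using strat_eps_SPE outcome_strat by blast
qed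

end
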